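(* Let $\Sigma=I_d$, $\beta_*\in\mathbb{R}^d$, $\sigma^2\ge0$. Define the deterministic equivalents of the min-norm interpolator as follows. If $d<n$: $\mathsf{B}_{\mathsf{R},0}=0$, $\mathsf{V}_{\mathsf{R},0}=\frac{\sigma^2d}{n-d}$, $\mathsf{B}_{\mathsf{N},0}=\|\beta_*\|_2^2$, $\mathsf{V}_{\mathsf{N},0}=\frac{\sigma^2\operatorname{Tr}(\Sigma^{-1})}{n-d}$. If $d>n$, with $\lambda_n>0$ solving $\operatorname{Tr}(\Sigma(\Sigma+\lambda_nI)^{-1})=n$: $\mathsf{B}_{\mathsf{R},0}=\frac{\lambda_n^2\langle\beta_*,\Sigma(\Sigma+\lambda_nI)^{-2}\beta_*\rangle}{1-n^{-1}\operatorname{Tr}(\Sigma^2(\Sigma+\lambda_nI)^{-2})}$, $\mathsf{V}_{\mathsf{R},0}=\frac{\sigma^2\operatorname{Tr}(\Sigma^2(\Sigma+\lambda_nI)^{-2})}{n-\operatorname{Tr}(\Sigma^2(\Sigma+\lambda_nI)^{-2})}$, $\mathsf{B}_{\mathsf{N},0}=\langle\beta_*,\Sigma(\Sigma+\lambda_nI)^{-1}\beta_*\rangle$, $\mathsf{V}_{\mathsf{N},0}=\frac{\sigma^2\operatorname{Tr}(\Sigma(\Sigma+\lambda_nI)^{-2})}{n-\operatorname{Tr}(\Sigma^2(\Sigma+\lambda_nI)^{-2})}$. Let $\mathsf{R}_0=\mathsf{B}_{\mathsf{R},0}+\mathsf{V}_{\mathsf{R},0}$ and $\mathsf{N}_0=\mathsf{B}_{\mathsf{N},0}+\mathsf{V}_{\mathsf{N},0}$.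 Then $$\mathsf{R}_0=\begin{cases}\mathsf{N}_0-\|\beta_*\|_2^2,& d<n,\\ \sqrt{\big[\mathsf{N}_0-(\|\beta_*\|_2^2-\sigma^2)\big]^2+4\|\beta_*\|_2^2\sigma^2}-\sigma^2,& d>n.\end{cases}$$ Moreover, in both regimes $\mathsf{V}_{\mathsf{R},0}=\mathsf{V}_{\mathsf{N},0}$ and $\mathsf{B}_{\mathsf{R},0}+\mathsf{B}_{\mathsf{N},0}=\|\beta_*\|_2^2$.
   Context: These are deterministic equivalents of the bias/variance of the test risk $\mathbb{E}_\varepsilon\|\beta_*-\hat\beta_{\min}\|_\Sigma^2$ and of the squared norm $\mathbb{E}_\varepsilon\|\hat\beta_{\min}\|_2^2$ for the minimum-$\ell_2$-norm interpolator $\hat\beta_{\min}$ in linear regression with $n$ samples, dimension $d$, covariance $\Sigma$, noise variance $\sigma^2$; they are defined directly by the formulas in the claim. *)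

theory Defs
  imports "HOL-Analysis.Analysis"
begin

definition resolv :: "real^'d^'d \<Rightarrow> real \<Rightarrow> real^'d^'d" where
  "resolv S l = matrix_inv (S + l *\<^sub>R mat 1)"

definition lam_n :: "real^'d^'d \<Rightarrow> nat \<Rightarrow> real" where
  "lam_n S n = (THE l. l > 0 \<and> trace (S ** resolv S l) = real n)"

definition BR0 :: "real^'d^'d \<Rightarrow> real^'d \<Rightarrow> real \<Rightarrow> nat \<Rightarrow> real" where
  "BR0 S b s2 n =
    (if CARD('d) < n then 0
     else (let l = lam_n S n; R = resolv S l in
       l^2 * (b \<bullet> ((S ** R ** R) *v b))
       / (1 - trace (S ** S ** R ** R) / real n)))"

definition VR0 :: "real^'d^'d \<Rightarrow> real^'d \<Rightarrow> real \<Rightarrow> nat \<Rightarrow> real" where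
  "VR0 S b s2 n =
    (if CARD('d) < n then s2 * real CARD('d) / (real n - real CARD('d))
     else (let l = lam_n S n; R = resolv S l in
       s2 * trace (S ** S ** R ** R) / (real n - trace (S ** S ** R ** R))))"

definition BN0 :: "real^'d^'d \<Rightarrow> real^'d \<Rightarrow> real \<Rightarrow> nat \<Rightarrow> real" where
  "BN0 S b s2 n =
    (if CARD('d) < n then (norm b)^2
     else (let l = lam_n S n; R = resolv S l in
       b \<bullet> ((S ** R) *v b)))"

definition VN0 :: "real^'d^'d \<Rightarrow> real^'d \<Rightarrow> real \<Rightarrow> nat \<Rightarrow> real" where
  "VN0 S b s2 n =
    (if CARD('d) < n then s2 * trace (matrix_inv S) / (real n - real CARD('d))
     else (let l = lam_n S n; R = resolv S l in
       s2 * trace (S ** R ** R) / (real n - trace (S ** S ** R ** R))))"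

definition R0 :: "real^'d^'d \<Rightarrow> real^'d \<Rightarrow> real \<Rightarrow> nat \<Rightarrow> real" where
  "R0 S b s2 n = BR0 S b s2 n + VR0 S b s2 n"

definition N0 :: "real^'d^'d \<Rightarrow> real^'d \<Rightarrow> real \<Rightarrow> nat \<Rightarrow> real" where
  "N0 S b s2 n = BN0 S b s2 n + VN0 S b s2 n"

end

theory Submission
  imports Defs
begin

text \<open>For Sigma = I the resolvent is the scalar matrix 1/(1 + l), so the defining equation
d/(1 + lambda_n) = n gives lambda_n = d/n - 1, and with gamma = n/d all deterministic
equivalents become explicit: B_R = (1 - gamma) |beta|^2, B_N = gamma |beta|^2 and
V_R = V_N = s2 n/(d - n). The square-root formula is then the identity
(x - y)^2 + 4 x y = (x + y)^2 for x = s2 d/(d - n) and y = (1 - gamma) |beta|^2, whose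
product is s2 |beta|^2.\<close>

lemma mat_mult_mat: "(mat a :: 'a::semiring_1^'n^'n) ** mat b = mat (a * b)"
  by (simp add: vec_eq_iff matrix_matrix_mult_def mat_def if_distrib[of "\<lambda>x. x * _"] cong: if_cong)

lemma matrix_vector_mult_mat: "(mat a :: real^'n^'n) *v x = a *\<^sub>R x"
  by (simp add: vec_eq_iff matrix_vector_mult_def mat_def if_distrib[of "\<lambda>x. x * _"] cong: if_cong)

lemma trace_mat: "trace (mat a :: 'a::semiring_1^'n^'n) = of_nat CARD('n) * a"
  by (simp add: trace_def mat_def)

lemma matrix_inv_unique:
  fixes A :: "'a::semiring_1^'n^'m"
  assumes AB: "A ** B = mat 1" and BA: "B ** A = mat 1"
  shows "matrix_inv A = B"
proof -
  let ?A' = "matrix_inv A"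
  have inv: "A ** ?A' = mat 1 \<and> ?A' ** A = mat 1"
    unfolding matrix_inv_def by (rule someI[where x = B]) (simp add: AB BA)
  have "?A' = ?A' ** (A ** B)" using AB by simp
  also have "\<dots> = (?A' ** A) ** B" by (rule matrix_mul_assoc)
  also have "\<dots> = B" using inv by simp
  finally show ?thesis .
qed

lemma matrix_inv_mat:
  assumes "a \<noteq> 0"
  shows "matrix_inv (mat a :: 'a::field^'n^'n) = mat (inverse a)"
  using assms by (intro matrix_inv_unique) (simp_all add: mat_mult_mat)

lemma resolv_mat_1:
  assumes "1 + l \<noteq> 0"
  shows "resolv (mat 1 :: real^'n^'n) l = mat (1 / (1 + l))"
proof -
  have "(mat 1 :: real^'n^'n) + l *\<^sub>R mat 1 = mat (1 + l)"
    by (simp add: vec_eq_iff mat_def)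
  then show ?thesis
    unfolding resolv_def using assms by (simp add: matrix_inv_mat divide_inverse)
qed

lemma lam_n_mat_1:
  assumes "1 \<le> n" and "n < CARD('n)"
  shows "lam_n (mat 1 :: real^'n^'n) n = real CARD('n) / real n - 1"
proof -
  let ?d = "real CARD('n)"
  have "l > 0 \<and> trace ((mat 1 :: real^'n^'n) ** resolv (mat 1) l) = real n
        \<longleftrightarrow> l = ?d / n - 1" for l
  proof (cases "l > 0")
    case True
    then show ?thesis
      using assms by (auto simp: resolv_mat_1 trace_mat field_simps)
  next
    case False
    have "?d / n > 1" using assms by (simp add: field_simps)
    then show ?thesis using False by auto
  qed
  then show ?thesis unfolding lam_n_def by simp
qed

lemma resolv_mat_1_lam_n:
  assumes "1 \<le> n" and "n < CARD('n)"
  shows "resolv (mat 1) (lam_n (mat 1 :: real^'n^'n) n) = mat (real n / real CARD('n))"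
proof -
  have "real CARD('n) / n \<noteq> 0" using assms by simp
  then show ?thesis unfolding lam_n_mat_1[OF assms] by (simp add: resolv_mat_1)
qed

lemma BR0_mat_1_overparam:
  assumes "1 \<le> n" and "n < CARD('d)"
  shows "BR0 (mat 1) (b :: real^'d) s2 n = (1 - real n / real CARD('d)) * (norm b)\<^sup>2"
proof -
  define d where "d = real CARD('d)"
  have "d > n" "n > 0" using assms by (auto simp: d_def)
  have "BR0 (mat 1) b s2 n = (d / n - 1)\<^sup>2 * (b \<bullet> ((mat (n / d) ** mat (n / d)) *v b))
      / (1 - trace (mat (n / d) ** mat (n / d) :: real^'d^'d) / n)"
    using assms unfolding BR0_def Let_def resolv_mat_1_lam_n[OF assms] d_def
    by (simp add: lam_n_mat_1[OF assms])
  also have "\<dots> = (d / n - 1)\<^sup>2 * ((n / d)\<^sup>2 * (norm b)\<^sup>2) / (1 - d * (n / d)\<^sup>2 / n)"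
    by (simp add: mat_mult_mat matrix_vector_mult_mat trace_mat power2_eq_square d_def
        flip: power2_norm_eq_inner)
  also have "\<dots> = (1 - n / d) * (norm b)\<^sup>2"
    using \<open>d > n\<close> \<open>n > 0\<close> by (simp add: field_simps power2_eq_square)
  finally show ?thesis unfolding d_def .
qed

lemma BN0_mat_1_overparam:
  assumes "1 \<le> n" and "n < CARD('d)"
  shows "BN0 (mat 1) (b :: real^'d) s2 n = real n / real CARD('d) * (norm b)\<^sup>2"
  using assms
  by (simp add: BN0_def resolv_mat_1_lam_n matrix_vector_mult_mat flip: power2_norm_eq_inner)

lemma VR0_mat_1_overparam:
  assumes "1 \<le> n" and "n < CARD('d)"
  shows "VR0 (mat 1) (b :: real^'d) s2 n = s2 * real n / (real CARD('d) - real n)"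
proof -
  define d where "d = real CARD('d)"
  have "d > n" "n > 0" using assms by (auto simp: d_def)
  have "VR0 (mat 1) b s2 n = s2 * (d * (n / d)\<^sup>2) / (n - d * (n / d)\<^sup>2)"
    using assms
    by (simp add: VR0_def resolv_mat_1_lam_n mat_mult_mat trace_mat power2_eq_square d_def)
  also have "\<dots> = s2 * n / (d - n)"
    using \<open>d > n\<close> \<open>n > 0\<close> by (simp add: field_simps power2_eq_square)
  finally show ?thesis unfolding d_def .
qed

lemma VN0_mat_1_eq_VR0: "VN0 (mat 1 :: real^'d^'d) b s2 n = VR0 (mat 1) b s2 n"
  by (simp add: VN0_def VR0_def matrix_inv_mat trace_mat)

lemma sqrt_diff_square_add_four_mult:
  fixes x y :: real
  assumes "0 \<le> x + y"
  shows "sqrt ((x - y)\<^sup>2 + 4 * (x * y)) = x + y"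
proof -
  have "(x - y)\<^sup>2 + 4 * (x * y) = (x + y)\<^sup>2" by algebra
  then show ?thesis using assms by simp
qed

lemma overparam_risk_norm_identity:
  fixes B s2 n d :: real
  assumes "0 \<le> B" and "0 \<le> s2" and "0 < n" and "n < d"
  shows "sqrt ((n / d * B + s2 * n / (d - n) - (B - s2))\<^sup>2 + 4 * B * s2) - s2
       = (1 - n / d) * B + s2 * n / (d - n)"
proof -
  define x where "x = s2 * d / (d - n)"
  define y where "y = (1 - n / d) * B"
  have "n / d * B + s2 * n / (d - n) - (B - s2) = x - y"
    using assms unfolding x_def y_def by (simp add: field_simps)
  moreover have "B * s2 = x * y"
    using assms unfolding x_def y_def by (simp add: field_simps)
  moreover have "(1 - n / d) * B + s2 * n / (d - n) = x + y - s2"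
    using assms unfolding x_def y_def by (simp add: field_simps)
  moreover have "0 \<le> x + y"
    using assms unfolding x_def y_def by simp
  ultimately show ?thesis
    by (simp add: sqrt_diff_square_add_four_mult mult.assoc)
qed

theorem corollary6:
  fixes beta :: "real^'d" and s2 :: real and n :: nat
  assumes "s2 \<ge> 0" and "n \<ge> 1"
  shows "(CARD('d) < n \<longrightarrow>
            R0 (mat 1) beta s2 n = N0 (mat 1) beta s2 n - (norm beta)^2)
       \<and> (CARD('d) > n \<longrightarrow>
            R0 (mat 1) beta s2 n =
              sqrt ((N0 (mat 1) beta s2 n - ((norm beta)^2 - s2))^2
                    + 4 * (norm beta)^2 * s2) - s2)
       \<and> (CARD('d) \<noteq> n \<longrightarrow>
            VR0 (mat 1) beta s2 n = VN0 (mat 1) beta s2 n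
            \<and> BR0 (mat 1) beta s2 n + BN0 (mat 1) beta s2 n = (norm beta)^2)"
proof (cases "CARD('d) < n")
  case True
  then show ?thesis
    by (simp add: R0_def N0_def BR0_def BN0_def VN0_mat_1_eq_VR0)
next
  case False
  show ?thesis
  proof (cases "n < CARD('d)")
    case True
    have "0 < real n" "real n < real CARD('d)" using assms True by auto
    from overparam_risk_norm_identity[OF zero_le_power2 assms(1) this, of "norm beta"]
    show ?thesis
      using True assms False
      by (simp add: R0_def N0_def BR0_mat_1_overparam BN0_mat_1_overparam VR0_mat_1_overparam
          VN0_mat_1_eq_VR0 algebra_simps)
  qed (use False in simp)
qed

end
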